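(* Let $(X,d)$ be a compact doubling metric space with $\operatorname{diam}(X,d)=1/2$ and $\mathcal S$ a hyperbolic filling with parameters $a\ge\lambda\ge6$. Let $\rho:\mathcal S\to(0,\infty)$ satisfy (H1), (H2), (H3). Define $\Theta_\rho(x,x)=0$ and, for distinct $x,y\in X$, \[ \Theta_\rho(x,y)=\inf\Big\{\sum_{i=0}^{k-1}\pi(c(x_i,x_{i+1})):k\in\mathbb N,\ x_0=x,\ x_k=y,\ x_i\in X,\ x_i\neq x_{i+1}\Big\}. \] Then $\Theta_\rho$ is a metric on $X$ and $\Theta_\rho\in\mathcal J_p(X,d)$.
   Context: Hyperbolic filling: $X_0\subset X_1\subset\cdots$ increasing, $X_n$ maximal $a^{-n}$-separated in $X$ ($X_0=\{x_0\}$); $\mathcal S_n=\{(x,n):x\in X_n\}$, $\mathcal S=\bigcup_n\mathcal S_n$, $\pi_1(x,n)=x$, $\pi_2(x,n)=n$, $v_0=(x_0,0)$, $B_v=B(\pi_1(v),a^{-\pi_2(v)})$. Each $(x,n)$, $n\ge1$, has a fixed parent $(y,n-1)$ with $d(x,y)=\min_{z\in X_{n-1}}d(x,z)$. The genealogy $g(v)$ of $v\in\mathcal S_k$ is $(v_0,\dots,v_k=v)$ with $v_i$ the parent of $v_{i+1}$. Graph $(\mathcal S,D_2)$: edges between a vertex and its parent, and horizontal edges between distinct $(x,n),(y,n)$ with $B(x,\lambda a^{-n})\cap B(y,\lambda a^{-n})\ne\emptyset$. Paths are finite sequences of vertices with consecutive ones adjacent. $\pi(v)=\prod_{w\in g(v)}\rho(w)$,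 $L_\rho(\gamma)=\sum_{v\in\gamma}\pi(v)$. For distinct $x,y$: $\tilde n$ is the largest integer with $\{x,y\}\subset B(\tilde z,2a^{-\tilde n})$ for some $(\tilde z,\tilde n)\in\mathcal S$; $c(x,y)=\{(\tilde z,\tilde n)\in\mathcal S:\{x,y\}\subset B(\tilde z,2a^{-\tilde n})\}$; $\pi(c(x,y))=\max_{w\in c(x,y)}\pi(w)$. $\Gamma_n(x,y)$: paths $(v_1,\dots,v_k)$ with $\pi_2(v_1)=\pi_2(v_k)=n$, $x\in B_{v_1}$, $y\in B_{v_k}$. (H1) $0<\eta_-\le\rho\le\eta_+<1$. (H2) $\pi(v)\le K_0\pi(w)$ for horizontally adjacent $v,w$, some $K_0\ge1$. (H3) there is $K_1\ge1$ such that for distinct $x,y$ there is $n_0$ with $L_\rho(\gamma)\ge K_1^{-1}\pi(c(x,y))$ for $n\ge n_0$, $\gamma\in\Gamma_n(x,y)$. $\mathcal J_p(X,d)$: metrics $\theta$ on $X$ with $\theta(x,a)/\theta(x,b)\le C((d(x,a)/d(x,b))^\alpha\vee(d(x,a)/d(x,b))^{1/\alpha})$ for all $x,a,b$, $x\ne b$, for some $C,\alpha\ge1$. *)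

theory Defs
  imports "HOL-Analysis.Analysis"
begin

text \<open>Metric space: a carrier X inside a metric_space type, with d = dist.
Vertices of the hyperbolic filling are pairs (x, n) :: 'a \<times> nat.\<close>

definition doubling :: "'a::metric_space set \<Rightarrow> bool" where
  "doubling X \<longleftrightarrow> (\<exists>N::nat. \<forall>x\<in>X. \<forall>r>0. \<exists>F. F \<subseteq> X \<and> finite F \<and> card F \<le> N \<and>
      ball x (2*r) \<inter> X \<subseteq> (\<Union>y\<in>F. ball y r))"

definition separated :: "'a::metric_space set \<Rightarrow> real \<Rightarrow> bool" where
  "separated A r \<longleftrightarrow> (\<forall>x\<in>A. \<forall>y\<in>A. x \<noteq> y \<longrightarrow> r \<le> dist x y)"

definition max_separated :: "'a::metric_space set \<Rightarrow> 'a set \<Rightarrow> real \<Rightarrow> bool" where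
  "max_separated X A r \<longleftrightarrow> A \<subseteq> X \<and> separated A r \<and>
     (\<forall>B. A \<subseteq> B \<and> B \<subseteq> X \<and> separated B r \<longrightarrow> B = A)"

definition hyperbolic_filling ::
  "'a::metric_space set \<Rightarrow> real \<Rightarrow> real \<Rightarrow> (nat \<Rightarrow> 'a set) \<Rightarrow> 'a \<Rightarrow> ('a \<times> nat \<Rightarrow> 'a \<times> nat) \<Rightarrow> bool" where
  "hyperbolic_filling X a lam Xs x0 par \<longleftrightarrow>
     lam \<le> a \<and> 6 \<le> lam \<and> x0 \<in> X \<and> Xs 0 = {x0} \<and>
     (\<forall>n. Xs n \<subseteq> Xs (Suc n)) \<and>
     (\<forall>n. max_separated X (Xs n) (1 / a ^ n)) \<and>
     (\<forall>n x. x \<in> Xs (Suc n) \<longrightarrow>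
        snd (par (x, Suc n)) = n \<and> fst (par (x, Suc n)) \<in> Xs n \<and>
        (\<forall>z\<in>Xs n. dist x (fst (par (x, Suc n))) \<le> dist x z))"

definition fverts :: "(nat \<Rightarrow> 'a set) \<Rightarrow> ('a \<times> nat) set" where
  "fverts Xs = {(x, n). x \<in> Xs n}"

text \<open>pi(v) = product of rho over the genealogy v_0, ..., v_k = v, where v_{k-i} = par^i v.\<close>
definition pi_rho :: "('a \<times> nat \<Rightarrow> real) \<Rightarrow> ('a \<times> nat \<Rightarrow> 'a \<times> nat) \<Rightarrow> 'a \<times> nat \<Rightarrow> real" where
  "pi_rho rho par v = (\<Prod>i\<in>{0..snd v}. rho ((par ^^ i) v))"

definition horiz_adj ::
  "'a::metric_space set \<Rightarrow> real \<Rightarrow> real \<Rightarrow> (nat \<Rightarrow> 'a set) \<Rightarrow> 'a \<times> nat \<Rightarrow> 'a \<times> nat \<Rightarrow> bool" where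
  "horiz_adj X a lam Xs v w \<longleftrightarrow> v \<in> fverts Xs \<and> w \<in> fverts Xs \<and> snd v = snd w \<and> v \<noteq> w \<and>
     (\<exists>z\<in>X. dist (fst v) z < lam / a ^ snd v \<and> dist (fst w) z < lam / a ^ snd w)"

definition adjacent ::
  "'a::metric_space set \<Rightarrow> real \<Rightarrow> real \<Rightarrow> (nat \<Rightarrow> 'a set) \<Rightarrow> ('a \<times> nat \<Rightarrow> 'a \<times> nat) \<Rightarrow>
     'a \<times> nat \<Rightarrow> 'a \<times> nat \<Rightarrow> bool" where
  "adjacent X a lam Xs par v w \<longleftrightarrow> horiz_adj X a lam Xs v w \<or>
     (v \<in> fverts Xs \<and> w \<in> fverts Xs \<and>
       ((1 \<le> snd v \<and> w = par v) \<or> (1 \<le> snd w \<and> v = par w)))"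

definition is_fpath ::
  "'a::metric_space set \<Rightarrow> real \<Rightarrow> real \<Rightarrow> (nat \<Rightarrow> 'a set) \<Rightarrow> ('a \<times> nat \<Rightarrow> 'a \<times> nat) \<Rightarrow>
     ('a \<times> nat) list \<Rightarrow> bool" where
  "is_fpath X a lam Xs par \<gamma> \<longleftrightarrow> \<gamma> \<noteq> [] \<and> set \<gamma> \<subseteq> fverts Xs \<and>
     successively (adjacent X a lam Xs par) \<gamma>"

definition Gamma_n ::
  "'a::metric_space set \<Rightarrow> real \<Rightarrow> real \<Rightarrow> (nat \<Rightarrow> 'a set) \<Rightarrow> ('a \<times> nat \<Rightarrow> 'a \<times> nat) \<Rightarrow>
     nat \<Rightarrow> 'a \<Rightarrow> 'a \<Rightarrow> ('a \<times> nat) list set" where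
  "Gamma_n X a lam Xs par n x y = {\<gamma>. is_fpath X a lam Xs par \<gamma> \<and>
     snd (hd \<gamma>) = n \<and> snd (last \<gamma>) = n \<and>
     dist (fst (hd \<gamma>)) x < 1 / a ^ n \<and> dist (fst (last \<gamma>)) y < 1 / a ^ n}"

definition L_rho :: "('a \<times> nat \<Rightarrow> real) \<Rightarrow> ('a \<times> nat \<Rightarrow> 'a \<times> nat) \<Rightarrow> ('a \<times> nat) list \<Rightarrow> real" where
  "L_rho rho par \<gamma> = sum_list (map (pi_rho rho par) \<gamma>)"

definition ntilde :: "real \<Rightarrow> (nat \<Rightarrow> 'a::metric_space set) \<Rightarrow> 'a \<Rightarrow> 'a \<Rightarrow> nat" where
  "ntilde a Xs x y = (GREATEST n. \<exists>z\<in>Xs n. dist z x < 2 / a ^ n \<and> dist z y < 2 / a ^ n)"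

definition cset :: "real \<Rightarrow> (nat \<Rightarrow> 'a::metric_space set) \<Rightarrow> 'a \<Rightarrow> 'a \<Rightarrow> ('a \<times> nat) set" where
  "cset a Xs x y = {v \<in> fverts Xs. snd v = ntilde a Xs x y \<and>
      dist (fst v) x < 2 / a ^ snd v \<and> dist (fst v) y < 2 / a ^ snd v}"

definition pi_c ::
  "real \<Rightarrow> (nat \<Rightarrow> 'a::metric_space set) \<Rightarrow> ('a \<times> nat \<Rightarrow> real) \<Rightarrow> ('a \<times> nat \<Rightarrow> 'a \<times> nat) \<Rightarrow>
     'a \<Rightarrow> 'a \<Rightarrow> real" where
  "pi_c a Xs rho par x y = Max (pi_rho rho par ` cset a Xs x y)"

definition Theta ::
  "'a::metric_space set \<Rightarrow> real \<Rightarrow> (nat \<Rightarrow> 'a set) \<Rightarrow> ('a \<times> nat \<Rightarrow> real) \<Rightarrow> ('a \<times> nat \<Rightarrow> 'a \<times> nat) \<Rightarrow>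
     'a \<Rightarrow> 'a \<Rightarrow> real" where
  "Theta X a Xs rho par x y = (if x = y then 0 else
     Inf {sum_list (map (\<lambda>(p, q). pi_c a Xs rho par p q) (zip xs (tl xs))) | xs.
            2 \<le> length xs \<and> hd xs = x \<and> last xs = y \<and> set xs \<subseteq> X \<and>
            successively (\<noteq>) xs})"

definition is_metric_on :: "'a set \<Rightarrow> ('a \<Rightarrow> 'a \<Rightarrow> real) \<Rightarrow> bool" where
  "is_metric_on X \<theta> \<longleftrightarrow> (\<forall>x\<in>X. \<forall>y\<in>X. 0 \<le> \<theta> x y \<and> (\<theta> x y = 0 \<longleftrightarrow> x = y) \<and> \<theta> x y = \<theta> y x) \<and>
     (\<forall>x\<in>X. \<forall>y\<in>X. \<forall>z\<in>X. \<theta> x z \<le> \<theta> x y + \<theta> y z)"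

definition in_Jp :: "'a::metric_space set \<Rightarrow> ('a \<Rightarrow> 'a \<Rightarrow> real) \<Rightarrow> bool" where
  "in_Jp X \<theta> \<longleftrightarrow> is_metric_on X \<theta> \<and>
     (\<exists>C \<alpha>. 1 \<le> C \<and> 1 \<le> \<alpha> \<and> (\<forall>x\<in>X. \<forall>p\<in>X. \<forall>q\<in>X. x \<noteq> q \<longrightarrow>
        \<theta> x p / \<theta> x q \<le> C * max ((dist x p / dist x q) powr \<alpha>) ((dist x p / dist x q) powr (1 / \<alpha>))))"

end

theory Submission
  imports Defs
begin

text \<open>\<open>\<Theta>\<close> is the chain metric generated by the symmetric cost \<open>\<pi>(c(x,y))\<close>, hence a pseudometric
  with \<open>\<Theta> \<le> \<pi>(c(\<cdot>,\<cdot>))\<close>. Conversely, a chain \<open>x = x\<^sub>0, \<dots>, x\<^sub>k = y\<close> lifts to a path of the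
  filling at a deep level \<open>N\<close>: for each link, climb the genealogies of level-\<open>N\<close> vertices near its
  endpoints up to the level of \<open>c(x\<^sub>i, x\<^sub>i\<^sub>+\<^sub>1)\<close>, where they meet horizontally. By (H1) the weights
  grow geometrically along a genealogy and by (H2) they are comparable across horizontal edges, so
  each piece has \<open>\<rho>\<close>-length \<open>O(\<pi>(c(x\<^sub>i, x\<^sub>i\<^sub>+\<^sub>1)))\<close>, while (H3) bounds the length of the whole
  path from below by \<open>\<pi>(c(x,y)) / K\<^sub>1\<close>. Hence \<open>\<Theta>\<close> and \<open>\<pi>(c(\<cdot>,\<cdot>))\<close> are comparable.
  Quasisymmetry follows because \<open>d(x,y)\<close> is comparable to \<open>a\<^sup>-\<^sup>n\<close> with \<open>n = ntilde a Xs x y\<close>,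
  while by (H1) and (H2) \<open>\<pi>(c(x,\<cdot>))\<close> changes by a factor between \<open>\<eta>\<^sub>-\<^sup>k\<close> and \<open>\<eta>\<^sub>+\<^sup>k\<close>
  (up to \<open>K\<^sub>0\<close>) when that level increases by \<open>k\<close>.\<close>

section \<open>Chains and chain metrics\<close>

fun link_sum :: "('b \<Rightarrow> 'b \<Rightarrow> 'c::comm_monoid_add) \<Rightarrow> 'b list \<Rightarrow> 'c" where
  "link_sum f [] = 0"
| "link_sum f [x] = 0"
| "link_sum f (x # y # zs) = f x y + link_sum f (y # zs)"

lemma link_sum_conv_zip: "sum_list (map (\<lambda>(p, q). f p q) (zip xs (tl xs))) = link_sum f xs"
  by (induction f xs rule: link_sum.induct) auto

lemma link_le_link_sum: "successively (\<lambda>p q. f p q \<le> link_sum f xs) (xs :: 'b list)"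
  for f :: "'b \<Rightarrow> 'b \<Rightarrow> nat"
proof (induction f xs rule: link_sum.induct)
  case (3 f x y zs)
  then have "successively (\<lambda>p q. f p q \<le> link_sum f (x # y # zs)) (y # zs)"
    by (rule successively_mono) auto
  then show ?case by simp
qed auto

lemma link_sum_Cons: "ys \<noteq> [] \<Longrightarrow> link_sum f (x # ys) = f x (hd ys) + link_sum f ys"
  by (cases ys) auto

lemma link_sum_append:
  "xs \<noteq> [] \<Longrightarrow> ys \<noteq> [] \<Longrightarrow> link_sum f (xs @ ys) = link_sum f xs + f (last xs) (hd ys) + link_sum f ys"
  by (induction xs rule: induct_list012) (auto simp: link_sum_Cons add.assoc)

lemma link_sum_rev: "(\<And>p q. f p q = f q p) \<Longrightarrow> link_sum f (rev xs) = link_sum f xs"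
proof (induction xs)
  case (Cons x xs)
  then show ?case
    by (cases "xs = []") (auto simp: link_sum_append link_sum_Cons last_rev add.commute)
qed simp

lemma sum_list_remdups_adj_le:
  "(\<And>v. v \<in> set xs \<Longrightarrow> 0 \<le> f v) \<Longrightarrow> sum_list (map f (remdups_adj xs)) \<le> sum_list (map f xs)"
  for f :: "'b \<Rightarrow> 'c::ordered_comm_monoid_add"
  by (induction xs rule: remdups_adj.induct) (auto intro: add_increasing add_left_mono)

fun ancestors :: "('b \<Rightarrow> 'b) \<Rightarrow> 'b \<Rightarrow> nat \<Rightarrow> 'b list" where
  "ancestors f v 0 = [v]"
| "ancestors f v (Suc j) = v # ancestors f (f v) j"

lemma ancestors_ne [simp]: "ancestors f v j \<noteq> []"
  by (cases j) auto

lemma hd_ancestors [simp]: "hd (ancestors f v j) = v"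
  by (cases j) auto

lemma last_ancestors [simp]: "last (ancestors f v j) = (f ^^ j) v"
  by (induction j arbitrary: v) (auto simp: funpow_Suc_right simp del: funpow.simps)

lemma successively_remdups_adj_if_reflclp:
  "successively (\<lambda>x y. x = y \<or> P x y) xs \<Longrightarrow> successively P (remdups_adj xs)"
  by (induction xs rule: remdups_adj.induct) (auto simp: successively_Cons)

definition chains :: "'a set \<Rightarrow> 'a \<Rightarrow> 'a \<Rightarrow> 'a list set" where
  "chains X x y = {xs. 2 \<le> length xs \<and> hd xs = x \<and> last xs = y \<and> set xs \<subseteq> X \<and> successively (\<noteq>) xs}"

definition chain_metric :: "'a set \<Rightarrow> ('a \<Rightarrow> 'a \<Rightarrow> real) \<Rightarrow> 'a \<Rightarrow> 'a \<Rightarrow> real" where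
  "chain_metric X c x y = (if x = y then 0 else INF xs \<in> chains X x y. link_sum c xs)"

lemma Theta_eq_chain_metric: "Theta X a Xs rho par = chain_metric X (pi_c a Xs rho par)"
proof (intro ext)
  fix x y
  have "{sum_list (map (\<lambda>(p, q). pi_c a Xs rho par p q) (zip xs (tl xs))) | xs.
          2 \<le> length xs \<and> hd xs = x \<and> last xs = y \<and> set xs \<subseteq> X \<and> successively (\<noteq>) xs}
        = link_sum (pi_c a Xs rho par) ` chains X x y"
    unfolding chains_def link_sum_conv_zip by blast
  then show "Theta X a Xs rho par x y = chain_metric X (pi_c a Xs rho par) x y"
    unfolding Theta_def chain_metric_def by simp
qed

lemma pair_in_chains: "x \<in> X \<Longrightarrow> y \<in> X \<Longrightarrow> x \<noteq> y \<Longrightarrow> [x, y] \<in> chains X x y"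
  unfolding chains_def by simp

lemma rev_in_chains: "xs \<in> chains X x y \<Longrightarrow> rev xs \<in> chains X y x"
  unfolding chains_def by (auto simp: hd_rev last_rev intro: successively_mono)

lemma append_in_chains:
  assumes "xs \<in> chains X x y" and "y # ys \<in> chains X y z" and "x \<noteq> z"
  shows "xs @ ys \<in> chains X x z"
  using assms unfolding chains_def
  by (cases ys) (auto simp: successively_append_iff hd_append)

locale chain_cost =
  fixes X :: "'a set" and c :: "'a \<Rightarrow> 'a \<Rightarrow> real"
  assumes cost_pos: "x \<in> X \<Longrightarrow> y \<in> X \<Longrightarrow> x \<noteq> y \<Longrightarrow> 0 < c x y"
    and cost_sym: "c x y = c y x"
begin

lemma link_sum_nonneg: "set xs \<subseteq> X \<Longrightarrow> successively (\<noteq>) xs \<Longrightarrow> 0 \<le> link_sum c xs"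
  by (induction xs rule: induct_list012) (auto intro: add_nonneg_nonneg less_imp_le cost_pos)

lemma bdd_below_chain_sums: "bdd_below (link_sum c ` chains X x y)"
  by (rule bdd_belowI[of _ 0]) (auto simp: chains_def intro: link_sum_nonneg)

lemma chain_metric_le_link_sum: "xs \<in> chains X x y \<Longrightarrow> chain_metric X c x y \<le> link_sum c xs"
  unfolding chain_metric_def
  by (auto intro!: cInf_lower bdd_below_chain_sums link_sum_nonneg simp: chains_def)

lemma chain_metric_le_cost: "x \<in> X \<Longrightarrow> y \<in> X \<Longrightarrow> x \<noteq> y \<Longrightarrow> chain_metric X c x y \<le> c x y"
  using chain_metric_le_link_sum[OF pair_in_chains] by simp

lemma chain_metric_ge:
  assumes "x \<in> X" "y \<in> X" "x \<noteq> y" and "\<And>xs. xs \<in> chains X x y \<Longrightarrow> b \<le> link_sum c xs"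
  shows "b \<le> chain_metric X c x y"
  using assms pair_in_chains[of x X y] unfolding chain_metric_def by (auto intro!: cINF_greatest)

lemma chain_metric_nonneg:
  assumes "x \<in> X" "y \<in> X"
  shows "0 \<le> chain_metric X c x y"
proof (cases "x = y")
  case False
  then show ?thesis
    using assms by (intro chain_metric_ge) (auto simp: chains_def intro: link_sum_nonneg)
qed (simp add: chain_metric_def)

lemma chain_metric_sym_le:
  assumes "x \<in> X" "y \<in> X"
  shows "chain_metric X c y x \<le> chain_metric X c x y"
proof (cases "x = y")
  case False
  have "chain_metric X c y x \<le> link_sum c xs" if "xs \<in> chains X x y" for xs
    using chain_metric_le_link_sum[OF rev_in_chains[OF that]] by (simp add: link_sum_rev cost_sym)
  with assms False show ?thesis by (intro chain_metric_ge) auto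
qed (simp add: chain_metric_def)

lemma chain_metric_sym: "x \<in> X \<Longrightarrow> y \<in> X \<Longrightarrow> chain_metric X c x y = chain_metric X c y x"
  using chain_metric_sym_le by (meson order_antisym)

lemma chain_metric_triangle:
  assumes "x \<in> X" "y \<in> X" "z \<in> X"
  shows "chain_metric X c x z \<le> chain_metric X c x y + chain_metric X c y z"
proof -
  consider "x = z" | "x = y" | "y = z" | "x \<noteq> y" "y \<noteq> z" "x \<noteq> z" by blast
  then show ?thesis
  proof cases
    case 1
    then show ?thesis using chain_metric_nonneg assms by (simp add: chain_metric_def[of X c z z])
  next
    case 4
    have concat: "chain_metric X c x z \<le> link_sum c xs + link_sum c (y # ys)"
      if xs: "xs \<in> chains X x y" and ys: "y # ys \<in> chains X y z" for xs ys
    proof -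
      have "xs \<noteq> []" "ys \<noteq> []" "last xs = y" using xs ys by (auto simp: chains_def)
      then have "link_sum c (xs @ ys) = link_sum c xs + link_sum c (y # ys)"
        by (simp add: link_sum_append link_sum_Cons add.assoc)
      then show ?thesis using chain_metric_le_link_sum[OF append_in_chains[OF xs ys \<open>x \<noteq> z\<close>]] by simp
    qed
    have "chain_metric X c x z - link_sum c ys \<le> chain_metric X c x y" if ys: "ys \<in> chains X y z" for ys
    proof -
      obtain ys' where "ys = y # ys'" using ys by (cases ys) (auto simp: chains_def)
      then show ?thesis
        using concat ys assms 4 by (intro chain_metric_ge) (auto simp: algebra_simps)
    qed
    then have "chain_metric X c x z - chain_metric X c x y \<le> chain_metric X c y z"
      using assms 4 by (intro chain_metric_ge) (auto simp: algebra_simps)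
    then show ?thesis by simp
  qed (auto simp: chain_metric_def)
qed

lemma is_metric_on_chain_metric:
  assumes "\<And>x y. x \<in> X \<Longrightarrow> y \<in> X \<Longrightarrow> x \<noteq> y \<Longrightarrow> 0 < chain_metric X c x y"
  shows "is_metric_on X (chain_metric X c)"
proof -
  have "chain_metric X c x x = 0" for x by (simp add: chain_metric_def)
  then show ?thesis
    unfolding is_metric_on_def using chain_metric_nonneg chain_metric_sym chain_metric_triangle
    by (metis assms less_irrefl)
qed

lemma cost_le_chain_metric:
  assumes "x \<in> X" "y \<in> X" "x \<noteq> y" and "0 < M"
    and "\<And>xs. xs \<in> chains X x y \<Longrightarrow> c x y \<le> M * link_sum c xs"
  shows "c x y / M \<le> chain_metric X c x y"
  using assms by (intro chain_metric_ge) (auto simp: pos_divide_le_eq mult.commute)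

end

section \<open>Weights on the hyperbolic filling\<close>

locale weighted_filling =
  fixes X :: "'a::metric_space set" and a lam :: real and Xs :: "nat \<Rightarrow> 'a set" and x0 :: 'a
    and par :: "'a \<times> nat \<Rightarrow> 'a \<times> nat" and rho :: "'a \<times> nat \<Rightarrow> real"
    and eta_minus eta_plus K0 :: real
  assumes compact: "compact X" and diameter: "diameter X = 1/2"
    and filling: "hyperbolic_filling X a lam Xs x0 par"
    and eta_minus_pos: "0 < eta_minus" and eta_minus_le_plus: "eta_minus \<le> eta_plus"
    and eta_plus_less_1: "eta_plus < 1"
    and rho_bounds: "v \<in> fverts Xs \<Longrightarrow> eta_minus \<le> rho v \<and> rho v \<le> eta_plus"
    and K0_ge_1: "1 \<le> K0"
    and pi_rho_horiz_adj: "horiz_adj X a lam Xs v w \<Longrightarrow> pi_rho rho par v \<le> K0 * pi_rho rho par w"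
begin

abbreviation \<pi> where "\<pi> \<equiv> pi_rho rho par"

lemma a_ge_6: "6 \<le> a" and lam_ge_6: "6 \<le> lam"
  and x0_in_X: "x0 \<in> X" and Xs_0: "Xs 0 = {x0}" and Xs_subset: "Xs n \<subseteq> X"
  and Xs_separated: "separated (Xs n) (1 / a ^ n)"
  and Xs_maximal: "Xs n \<subseteq> B \<Longrightarrow> B \<subseteq> X \<Longrightarrow> separated B (1 / a ^ n) \<Longrightarrow> B = Xs n"
  using filling unfolding hyperbolic_filling_def max_separated_def by auto

lemma a_pos: "0 < a"
  using a_ge_6 by simp

lemma scale_pos: "0 < 1 / a ^ n"
  using a_pos by simp

lemma scale_antimono: "m \<le> n \<Longrightarrow> 1 / a ^ n \<le> 1 / a ^ m"
  using a_ge_6 by (intro divide_left_mono power_increasing) auto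

lemma net_cover: "x \<in> X \<Longrightarrow> \<exists>z\<in>Xs n. dist x z < 1 / a ^ n"
proof (rule ccontr)
  assume x: "x \<in> X" and far: "\<not> (\<exists>z\<in>Xs n. dist x z < 1 / a ^ n)"
  then have "separated (insert x (Xs n)) (1 / a ^ n)"
    using Xs_separated[of n] unfolding separated_def by (auto simp: dist_commute)
  then have "x \<in> Xs n" using Xs_maximal[of n "insert x (Xs n)"] Xs_subset x by auto
  then show False using far scale_pos[of n] by auto
qed

lemma finite_Xs: "finite (Xs n)"
proof -
  have "\<not> z islimpt Xs n" for z
  proof
    assume "z islimpt Xs n"
    then obtain x' where x': "x' \<in> Xs n" "x' \<noteq> z" "dist x' z < (1 / a ^ n) / 2"
      using scale_pos[of n] unfolding islimpt_approachable by (meson half_gt_zero)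
    with \<open>z islimpt Xs n\<close> obtain x'' where x'': "x'' \<in> Xs n" "x'' \<noteq> z" "dist x'' z < dist x' z"
      unfolding islimpt_approachable by (meson zero_less_dist_iff)
    then have "1 / a ^ n \<le> dist x' x''"
      using Xs_separated[of n] x' unfolding separated_def by auto
    moreover have "dist x' x'' \<le> dist x' z + dist x'' z" by (rule dist_triangle2)
    moreover have "2 * dist x' z < 1 / a ^ n" using x'(3) by simp
    ultimately show False using x'' by linarith
  qed
  then have "finite (X \<inter> Xs n)" using finite_not_islimpt_in_compact[OF compact] by blast
  moreover have "X \<inter> Xs n = Xs n" using Xs_subset by auto
  ultimately show ?thesis by simp
qed

lemma vertex_iff: "v \<in> fverts Xs \<longleftrightarrow> fst v \<in> Xs (snd v)"
  unfolding fverts_def by (cases v) auto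

lemma parent:
  assumes "v \<in> fverts Xs" "snd v = Suc n"
  shows "par v \<in> fverts Xs" "snd (par v) = n" "dist (fst v) (fst (par v)) < 1 / a ^ n"
proof -
  obtain x where v: "v = (x, Suc n)" and x: "x \<in> Xs (Suc n)"
    using assms vertex_iff by (cases v) auto
  then show "par v \<in> fverts Xs" "snd (par v) = n"
    using filling vertex_iff unfolding hyperbolic_filling_def by auto
  obtain z where "z \<in> Xs n" "dist x z < 1 / a ^ n"
    using net_cover x Xs_subset by blast
  moreover have "\<forall>z\<in>Xs n. dist x (fst (par v)) \<le> dist x z"
    using filling x v unfolding hyperbolic_filling_def by auto
  ultimately show "dist (fst v) (fst (par v)) < 1 / a ^ n" using v by force
qed

lemma pi_parent:
  assumes "v \<in> fverts Xs" "snd v = Suc n"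
  shows "\<pi> v = rho v * \<pi> (par v)"
proof -
  have "\<pi> v = rho v * (\<Prod>i\<in>{0..n}. rho ((par ^^ Suc i) v))"
    unfolding pi_rho_def assms(2) by (subst prod.atLeast0_atMost_Suc_shift) simp
  also have "(\<Prod>i\<in>{0..n}. rho ((par ^^ Suc i) v)) = \<pi> (par v)"
    unfolding pi_rho_def parent(2)[OF assms] by (simp add: funpow_Suc_right del: funpow.simps)
  finally show ?thesis .
qed

lemma pi_pos: "v \<in> fverts Xs \<Longrightarrow> 0 < \<pi> v"
proof (induction "snd v" arbitrary: v)
  case 0
  then show ?case using rho_bounds eta_minus_pos by (fastforce simp: pi_rho_def)
next
  case (Suc n)
  have sv: "snd v = Suc n" using Suc.hyps(2) by simp
  have "0 < rho v" using rho_bounds Suc.prems eta_minus_pos by (meson less_le_trans)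
  moreover have "0 < \<pi> (par v)" using Suc.hyps(1) parent(1,2)[OF Suc.prems sv] by simp
  ultimately show ?case by (simp add: pi_parent[OF Suc.prems sv])
qed

lemma ancestor_vertex:
  "v \<in> fverts Xs \<Longrightarrow> snd v = k + j \<Longrightarrow> (par ^^ j) v \<in> fverts Xs \<and> snd ((par ^^ j) v) = k"
  by (induction j arbitrary: v) (auto simp: parent funpow_Suc_right simp del: funpow.simps)

text \<open>\<open>6/5 = 1/(1 - 1/6)\<close> bounds the geometric series of parent steps, as \<open>a \<ge> 6\<close>.\<close>
lemma dist_ancestor:
  "v \<in> fverts Xs \<Longrightarrow> snd v = k + j \<Longrightarrow>
     dist (fst v) (fst ((par ^^ j) v)) \<le> 6/5 * (1 / a ^ k - 1 / a ^ (k + j))"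
proof (induction j arbitrary: v)
  case (Suc j)
  have sv: "snd v = Suc (k + j)" using Suc.prems by simp
  have "dist (fst v) (fst ((par ^^ Suc j) v))
      \<le> dist (fst v) (fst (par v)) + dist (fst (par v)) (fst ((par ^^ j) (par v)))"
    by (simp add: funpow_Suc_right dist_triangle del: funpow.simps)
  also have "\<dots> \<le> 1 / a ^ (k + j) + 6/5 * (1 / a ^ k - 1 / a ^ (k + j))"
    using parent[OF Suc.prems(1) sv] Suc.IH by (intro add_mono) auto
  also have "\<dots> \<le> 6/5 * (1 / a ^ k - 1 / a ^ (k + Suc j))"
    using a_ge_6 by (simp add: field_simps)
  finally show ?case .
qed simp

lemma dist_ancestor_le:
  assumes "v \<in> fverts Xs" "snd v = k + j"
  shows "dist (fst v) (fst ((par ^^ j) v)) \<le> 6/5 * (1 / a ^ k)"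
proof -
  have "6/5 * (1 / a ^ k - 1 / a ^ (k + j)) \<le> 6/5 * (1 / a ^ k)"
    using scale_pos[of "k + j"] by simp
  then show ?thesis using dist_ancestor[OF assms] by linarith
qed

lemma pi_ancestor_bounds:
  "v \<in> fverts Xs \<Longrightarrow> snd v = k + j \<Longrightarrow>
     eta_minus ^ j * \<pi> ((par ^^ j) v) \<le> \<pi> v \<and> \<pi> v \<le> eta_plus ^ j * \<pi> ((par ^^ j) v)"
proof (induction j arbitrary: v)
  case (Suc j)
  have sv: "snd v = Suc (k + j)" using Suc.prems by simp
  define u where "u = (par ^^ j) (par v)"
  have u: "(par ^^ Suc j) v = u" unfolding u_def by (simp add: funpow_Suc_right del: funpow.simps)
  have IH: "eta_minus ^ j * \<pi> u \<le> \<pi> (par v)" "\<pi> (par v) \<le> eta_plus ^ j * \<pi> u"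
    using Suc.IH parent[OF Suc.prems(1) sv] unfolding u_def by auto
  have pv: "\<pi> v = rho v * \<pi> (par v)" using pi_parent[OF Suc.prems(1) sv] .
  have rho: "eta_minus \<le> rho v" "rho v \<le> eta_plus" using rho_bounds Suc.prems by auto
  have pos: "0 < \<pi> u" "0 < \<pi> (par v)"
    using pi_pos ancestor_vertex parent[OF Suc.prems(1) sv] unfolding u_def by auto
  have "eta_minus ^ Suc j * \<pi> u = eta_minus * (eta_minus ^ j * \<pi> u)" by simp
  also have "\<dots> \<le> rho v * \<pi> (par v)"
    using IH(1) rho(1) pos eta_minus_pos by (intro mult_mono) auto
  finally have lower: "eta_minus ^ Suc j * \<pi> u \<le> \<pi> v" using pv by simp
  have "rho v * \<pi> (par v) \<le> eta_plus * (eta_plus ^ j * \<pi> u)"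
    using IH(2) rho pos eta_minus_pos by (intro mult_mono) auto
  then have upper: "\<pi> v \<le> eta_plus ^ Suc j * \<pi> u" using pv by simp
  show ?case unfolding u using lower upper by (rule conjI)
qed simp

lemma eq_or_horiz_adj:
  assumes "v \<in> fverts Xs" "w \<in> fverts Xs" "snd v = snd w" "z \<in> X"
    and "dist (fst v) z < 6 / a ^ snd v" "dist (fst w) z < 6 / a ^ snd v"
  shows "v = w \<or> horiz_adj X a lam Xs v w"
proof -
  have "6 / a ^ snd v \<le> lam / a ^ snd v"
    using lam_ge_6 a_pos by (simp add: divide_right_mono)
  then show ?thesis
    using assms unfolding horiz_adj_def by (intro disjCI conjI bexI[of _ z]) auto
qed

lemma pi_le_if_close:
  assumes "v \<in> fverts Xs" "w \<in> fverts Xs" "snd v = snd w" "dist (fst v) (fst w) < 6 / a ^ snd v"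
  shows "\<pi> v \<le> K0 * \<pi> w"
proof -
  have "fst w \<in> X" using assms(2) Xs_subset vertex_iff by auto
  then have "v = w \<or> horiz_adj X a lam Xs v w"
    using assms scale_pos[of "snd v"] by (intro eq_or_horiz_adj) auto
  then show ?thesis
  proof
    assume "v = w"
    then show ?thesis using pi_pos[OF assms(1)] K0_ge_1 by simp
  qed (rule pi_rho_horiz_adj)
qed

abbreviation common_ball_level :: "'a \<Rightarrow> 'a \<Rightarrow> nat \<Rightarrow> bool" where
  "common_ball_level x y n \<equiv> \<exists>z\<in>Xs n. dist z x < 2 / a ^ n \<and> dist z y < 2 / a ^ n"

lemma ntilde_greatest:
  assumes "x \<in> X" "y \<in> X" "x \<noteq> y"
  shows "common_ball_level x y (ntilde a Xs x y)" and "common_ball_level x y n \<Longrightarrow> n \<le> ntilde a Xs x y"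
proof -
  have "dist x0 x \<le> 1/2" "dist x0 y \<le> 1/2"
    using diameter_bounded_bound[OF compact_imp_bounded[OF compact] x0_in_X] assms diameter by auto
  then have level_0: "common_ball_level x y 0" using Xs_0 by auto
  obtain b where b: "4 / dist x y < a ^ b" using real_arch_pow a_ge_6 by fastforce
  have bounded: "n \<le> b" if level_n: "common_ball_level x y n" for n
  proof -
    obtain z where "dist z x < 2 / a ^ n" "dist z y < 2 / a ^ n" using level_n by blast
    moreover have "dist x y \<le> dist z x + dist z y" by (rule dist_triangle3)
    ultimately have "dist x y < 4 / a ^ n" by simp
    then have "a ^ n < 4 / dist x y" using assms a_pos by (simp add: field_simps)
    then have "a ^ n < a ^ b" using b by simp
    then show "n \<le> b" using a_ge_6 by (simp add: power_less_imp_less_exp less_imp_le)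
  qed
  show "common_ball_level x y (ntilde a Xs x y)"
    unfolding ntilde_def using GreatestI_nat[of "common_ball_level x y" 0 b] level_0 bounded by blast
  show "common_ball_level x y n \<Longrightarrow> n \<le> ntilde a Xs x y"
    unfolding ntilde_def using Greatest_le_nat[of "common_ball_level x y" n b] bounded by blast
qed

lemma dist_ntilde_bounds:
  assumes "x \<in> X" "y \<in> X" "x \<noteq> y"
  shows "1 / a ^ Suc (ntilde a Xs x y) < dist x y" "dist x y < 4 / a ^ ntilde a Xs x y"
proof -
  let ?m = "ntilde a Xs x y"
  obtain z where "dist z x < 2 / a ^ ?m" "dist z y < 2 / a ^ ?m" using ntilde_greatest(1)[OF assms] by blast
  moreover have "dist x y \<le> dist z x + dist z y" by (rule dist_triangle3)
  ultimately show "dist x y < 4 / a ^ ?m" by simp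
  obtain w where w: "w \<in> Xs (Suc ?m)" "dist x w < 1 / a ^ Suc ?m" using net_cover assms by blast
  moreover have "1 / a ^ Suc ?m < 2 / a ^ Suc ?m" using a_pos by (simp add: divide_strict_right_mono)
  ultimately have "2 / a ^ Suc ?m \<le> dist w y"
    using ntilde_greatest(2)[OF assms, of "Suc ?m"] by (force simp: dist_commute)
  moreover have "dist w y \<le> dist x w + dist x y" by (rule dist_triangle3)
  ultimately show "1 / a ^ Suc ?m < dist x y" using w by simp
qed

lemma ntilde_sym: "ntilde a Xs x y = ntilde a Xs y x"
  unfolding ntilde_def by (simp add: conj_commute)

lemma pi_c_sym: "pi_c a Xs rho par x y = pi_c a Xs rho par y x"
  unfolding pi_c_def cset_def by (simp add: ntilde_sym conj_commute)

lemma pi_c_attained: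
  assumes "x \<in> X" "y \<in> X" "x \<noteq> y"
  shows "\<exists>c\<in>cset a Xs x y. \<pi> c = pi_c a Xs rho par x y"
proof -
  let ?m = "ntilde a Xs x y"
  have "cset a Xs x y \<subseteq> (\<lambda>z. (z, ?m)) ` Xs ?m" unfolding cset_def fverts_def by auto
  then have "finite (cset a Xs x y)" using finite_Xs finite_subset by blast
  moreover have "cset a Xs x y \<noteq> {}"
    using ntilde_greatest(1)[OF assms] unfolding cset_def fverts_def by auto
  ultimately have "pi_c a Xs rho par x y \<in> \<pi> ` cset a Xs x y"
    unfolding pi_c_def by (intro Max_in) auto
  then show ?thesis by (metis imageE)
qed

lemma pi_c_pos: "x \<in> X \<Longrightarrow> y \<in> X \<Longrightarrow> x \<noteq> y \<Longrightarrow> 0 < pi_c a Xs rho par x y"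
  using pi_c_attained pi_pos unfolding cset_def by fastforce

text \<open>The ancestor of \<open>w\<close> at the level of \<open>v\<close> is \<open>v\<close> itself or horizontally adjacent to it.\<close>
lemma pi_compare_levels:
  assumes "v \<in> fverts Xs" "w \<in> fverts Xs" "snd v \<le> snd w"
    and "dist (fst v) x < 2 / a ^ snd v" "dist (fst w) x < 2 / a ^ snd w"
  shows "\<pi> w \<le> K0 * eta_plus ^ (snd w - snd v) * \<pi> v"
    and "eta_minus ^ (snd w - snd v) * \<pi> v \<le> K0 * \<pi> w"
proof -
  define m j where "m = snd v" and "j = snd w - snd v"
  define u where "u = (par ^^ j) w"
  have sw: "snd w = m + j" using assms(3) unfolding m_def j_def by simp
  have u: "u \<in> fverts Xs" "snd u = m" using ancestor_vertex[OF assms(2) sw] unfolding u_def by auto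
  have "dist (fst u) (fst v) \<le> dist (fst u) (fst w) + dist (fst w) x + dist x (fst v)"
    using dist_triangle[of "fst u" "fst v" "fst w"] dist_triangle[of "fst w" "fst v" x] by linarith
  also have "\<dots> < 6/5 * (1 / a ^ m) + 2 * (1 / a ^ m) + 2 * (1 / a ^ m)"
    using dist_ancestor_le[OF assms(2) sw] assms(4,5) scale_antimono[of m "snd w"] sw
    unfolding u_def m_def by (auto simp: dist_commute)
  finally have close: "dist (fst u) (fst v) < 6 / a ^ m" using a_pos by (simp add: field_simps)
  have uv: "\<pi> u \<le> K0 * \<pi> v" and vu: "\<pi> v \<le> K0 * \<pi> u"
    using pi_le_if_close[of u v] pi_le_if_close[of v u] close u assms(1)
    unfolding m_def by (auto simp: dist_commute)
  have bounds: "eta_minus ^ j * \<pi> u \<le> \<pi> w" "\<pi> w \<le> eta_plus ^ j * \<pi> u"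
    using pi_ancestor_bounds[OF assms(2) sw] unfolding u_def by auto
  have "\<pi> w \<le> eta_plus ^ j * \<pi> u" using bounds(2) .
  also have "\<dots> \<le> eta_plus ^ j * (K0 * \<pi> v)"
    using uv eta_minus_pos eta_minus_le_plus by (intro mult_left_mono) auto
  finally show "\<pi> w \<le> K0 * eta_plus ^ (snd w - snd v) * \<pi> v" unfolding j_def by (simp add: algebra_simps)
  have "eta_minus ^ j * \<pi> v \<le> eta_minus ^ j * (K0 * \<pi> u)"
    using vu eta_minus_pos by (intro mult_left_mono) auto
  also have "\<dots> \<le> K0 * \<pi> w" using bounds(1) K0_ge_1 by (simp add: mult.left_commute)
  finally show "eta_minus ^ (snd w - snd v) * \<pi> v \<le> K0 * \<pi> w" unfolding j_def .
qed

section \<open>Lifting chains to paths of the filling\<close>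

abbreviation adjacent_or_eq :: "'a \<times> nat \<Rightarrow> 'a \<times> nat \<Rightarrow> bool" where
  "adjacent_or_eq v w \<equiv> v = w \<or> adjacent X a lam Xs par v w"

definition walk :: "('a \<times> nat) list \<Rightarrow> 'a \<times> nat \<Rightarrow> 'a \<times> nat \<Rightarrow> bool" where
  "walk \<gamma> v w \<longleftrightarrow> \<gamma> \<noteq> [] \<and> hd \<gamma> = v \<and> last \<gamma> = w \<and> set \<gamma> \<subseteq> fverts Xs \<and>
     successively adjacent_or_eq \<gamma>"

lemma walk_append:
  "walk \<gamma>\<^sub>1 u v \<Longrightarrow> walk \<gamma>\<^sub>2 v' w \<Longrightarrow> adjacent_or_eq v v' \<Longrightarrow> walk (\<gamma>\<^sub>1 @ \<gamma>\<^sub>2) u w"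
  unfolding walk_def by (auto simp: successively_append_iff)

lemma walk_rev: "walk \<gamma> v w \<Longrightarrow> walk (rev \<gamma>) w v"
  unfolding walk_def adjacent_def horiz_adj_def
  by (auto simp: hd_rev last_rev elim!: successively_mono)

lemma is_fpath_remdups_adj:
  assumes "walk \<gamma> v w"
  shows "is_fpath X a lam Xs par (remdups_adj \<gamma>) \<and> hd (remdups_adj \<gamma>) = v \<and> last (remdups_adj \<gamma>) = w"
  using assms successively_remdups_adj_if_reflclp unfolding walk_def is_fpath_def by auto

lemma L_rho_remdups_adj_le: "set \<gamma> \<subseteq> fverts Xs \<Longrightarrow> L_rho rho par (remdups_adj \<gamma>) \<le> L_rho rho par \<gamma>"
  unfolding L_rho_def using pi_pos by (intro sum_list_remdups_adj_le) (auto intro: less_imp_le)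

lemma walk_ancestors:
  "v \<in> fverts Xs \<Longrightarrow> snd v = k + j \<Longrightarrow> walk (ancestors par v j) v ((par ^^ j) v)"
proof (induction j arbitrary: v)
  case (Suc j)
  have sv: "snd v = Suc (k + j)" using Suc.prems by simp
  have "adjacent X a lam Xs par v (par v)"
    unfolding adjacent_def using Suc.prems parent[OF Suc.prems(1) sv] by auto
  then show ?case
    using Suc.IH parent[OF Suc.prems(1) sv] Suc.prems(1)
    by (auto simp: walk_def funpow_Suc_right successively_Cons simp del: funpow.simps)
qed (simp add: walk_def)

lemma L_rho_ancestors:
  assumes "v \<in> fverts Xs" "snd v = k + j"
  shows "L_rho rho par (ancestors par v j) \<le> \<pi> ((par ^^ j) v) / (1 - eta_plus)"
proof -
  have "L_rho rho par (ancestors par v j) * (1 - eta_plus) \<le> \<pi> ((par ^^ j) v) * (1 - eta_plus ^ Suc j)"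
    using assms
  proof (induction j arbitrary: v)
    case 0
    then show ?case by (simp add: L_rho_def)
  next
    case (Suc j)
    define u where "u = (par ^^ j) (par v)"
    have sv: "snd v = Suc (k + j)" using Suc.prems by simp
    have u: "(par ^^ Suc j) v = u" unfolding u_def by (simp add: funpow_Suc_right del: funpow.simps)
    have top: "\<pi> v \<le> eta_plus ^ Suc j * \<pi> u"
      using pi_ancestor_bounds[OF Suc.prems(1), of k "Suc j"] sv u by simp
    have rest: "L_rho rho par (ancestors par (par v) j) * (1 - eta_plus) \<le> \<pi> u * (1 - eta_plus ^ Suc j)"
      using Suc.IH parent[OF Suc.prems(1) sv] unfolding u_def by auto
    have "L_rho rho par (ancestors par v (Suc j)) * (1 - eta_plus)
        = \<pi> v * (1 - eta_plus) + L_rho rho par (ancestors par (par v) j) * (1 - eta_plus)"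
      by (simp add: L_rho_def algebra_simps)
    also have "\<dots> \<le> eta_plus ^ Suc j * \<pi> u * (1 - eta_plus) + \<pi> u * (1 - eta_plus ^ Suc j)"
      using top rest eta_plus_less_1 by (intro add_mono mult_right_mono) auto
    also have "\<dots> = \<pi> u * (1 - eta_plus ^ Suc (Suc j))" by (simp add: algebra_simps)
    finally show ?case unfolding u .
  qed
  moreover have "\<pi> ((par ^^ j) v) * (1 - eta_plus ^ Suc j) \<le> \<pi> ((par ^^ j) v)"
    using pi_pos ancestor_vertex[OF assms] eta_minus_pos eta_minus_le_plus by (simp add: mult_left_le)
  ultimately show ?thesis
    using eta_plus_less_1 by (simp add: pos_le_divide_eq)
qed

definition net_point :: "nat \<Rightarrow> 'a \<Rightarrow> 'a" where
  "net_point N p = (SOME z. z \<in> Xs N \<and> dist p z < 1 / a ^ N)"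

lemma net_point:
  assumes "p \<in> X"
  shows "net_point N p \<in> Xs N \<and> dist p (net_point N p) < 1 / a ^ N"
proof -
  have "\<exists>z. z \<in> Xs N \<and> dist p z < 1 / a ^ N" using net_cover[OF assms] by blast
  then show ?thesis unfolding net_point_def by (rule someI_ex)
qed

lemma climbing_walk:
  assumes c: "c \<in> fverts Xs" "snd c = m" and t: "t \<in> X" "dist (fst c) t < 2 / a ^ m"
    and "m \<le> N"
  obtains \<gamma> u where "walk \<gamma> (net_point N t, N) u" "u \<in> fverts Xs" "snd u = m"
    "dist (fst u) (fst c) < 6 / a ^ m" "L_rho rho par \<gamma> \<le> K0 * \<pi> c / (1 - eta_plus)"
proof -
  define v j where "v = (net_point N t, N)" and "j = N - m"
  define u where "u = (par ^^ j) v"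
  have v: "v \<in> fverts Xs" "snd v = m + j" "dist (fst v) t < 1 / a ^ N"
    using net_point[OF t(1)] \<open>m \<le> N\<close> unfolding v_def j_def by (auto simp: vertex_iff dist_commute)
  have u: "u \<in> fverts Xs" "snd u = m" using ancestor_vertex[OF v(1,2)] unfolding u_def by auto
  have "dist (fst u) (fst c) \<le> dist (fst u) (fst v) + dist (fst v) t + dist t (fst c)"
    using dist_triangle[of "fst u" "fst c" "fst v"] dist_triangle[of "fst v" "fst c" t] by linarith
  also have "\<dots> < 6/5 * (1 / a ^ m) + 1 / a ^ m + 2 / a ^ m"
    using dist_ancestor_le[OF v(1,2)] v(3) scale_antimono[OF \<open>m \<le> N\<close>] t(2)
    unfolding u_def by (auto simp: dist_commute)
  finally have close: "dist (fst u) (fst c) < 6 / a ^ m" using a_pos by (simp add: field_simps)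
  have "L_rho rho par (ancestors par v j) \<le> \<pi> u / (1 - eta_plus)"
    using L_rho_ancestors[OF v(1,2)] unfolding u_def .
  also have "\<dots> \<le> K0 * \<pi> c / (1 - eta_plus)"
    using pi_le_if_close[of u c] u c close eta_plus_less_1 by (simp add: divide_right_mono)
  finally show thesis
    using that walk_ancestors[OF v(1,2)] u close unfolding u_def v_def by blast
qed

lemma link_walk:
  assumes "p \<in> X" "q \<in> X" "p \<noteq> q" "ntilde a Xs p q \<le> N"
  shows "\<exists>\<gamma>. walk \<gamma> (net_point N p, N) (net_point N q, N) \<and>
     L_rho rho par \<gamma> \<le> 2 * K0 / (1 - eta_plus) * pi_c a Xs rho par p q"
proof -
  obtain c where c: "c \<in> cset a Xs p q" "\<pi> c = pi_c a Xs rho par p q"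
    using pi_c_attained[OF assms(1-3)] by blast
  let ?m = "ntilde a Xs p q"
  have c': "c \<in> fverts Xs" "snd c = ?m" "dist (fst c) p < 2 / a ^ ?m" "dist (fst c) q < 2 / a ^ ?m"
    using c(1) unfolding cset_def by auto
  obtain \<gamma>p u where p: "walk \<gamma>p (net_point N p, N) u" "u \<in> fverts Xs" "snd u = ?m"
    "dist (fst u) (fst c) < 6 / a ^ ?m" "L_rho rho par \<gamma>p \<le> K0 * \<pi> c / (1 - eta_plus)"
    by (rule climbing_walk[OF c'(1,2) assms(1) c'(3) assms(4)])
  obtain \<gamma>q w where q: "walk \<gamma>q (net_point N q, N) w" "w \<in> fverts Xs" "snd w = ?m"
    "dist (fst w) (fst c) < 6 / a ^ ?m" "L_rho rho par \<gamma>q \<le> K0 * \<pi> c / (1 - eta_plus)"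
    by (rule climbing_walk[OF c'(1,2) assms(2) c'(4) assms(4)])
  have "fst c \<in> X" using c'(1) Xs_subset vertex_iff by auto
  then have "adjacent_or_eq u w"
    using eq_or_horiz_adj[OF p(2) q(2)] p(3,4) q(3,4) unfolding adjacent_def by auto
  then have "walk (\<gamma>p @ rev \<gamma>q) (net_point N p, N) (net_point N q, N)"
    using walk_append[OF p(1) walk_rev[OF q(1)]] by blast
  moreover have "L_rho rho par (\<gamma>p @ rev \<gamma>q) = L_rho rho par \<gamma>p + L_rho rho par \<gamma>q"
    by (simp add: L_rho_def rev_map[symmetric] sum_list_rev)
  ultimately show ?thesis using p(5) q(5) c(2) by (intro exI[of _ "\<gamma>p @ rev \<gamma>q"]) auto
qed

lemma chain_walk:
  assumes "2 \<le> length xs" "set xs \<subseteq> X" "successively (\<noteq>) xs"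
    and "successively (\<lambda>p q. ntilde a Xs p q \<le> N) xs"
  shows "\<exists>\<gamma>. walk \<gamma> (net_point N (hd xs), N) (net_point N (last xs), N) \<and>
     L_rho rho par \<gamma> \<le> 2 * K0 / (1 - eta_plus) * link_sum (pi_c a Xs rho par) xs"
  using assms
proof (induction xs rule: induct_list012)
  case (3 x y zs)
  have "x \<in> X" "y \<in> X" "x \<noteq> y" "ntilde a Xs x y \<le> N" using "3.prems" by auto
  then obtain \<gamma>\<^sub>1 where \<gamma>\<^sub>1: "walk \<gamma>\<^sub>1 (net_point N x, N) (net_point N y, N)"
    "L_rho rho par \<gamma>\<^sub>1 \<le> 2 * K0 / (1 - eta_plus) * pi_c a Xs rho par x y"
    using link_walk by blast
  show ?case
  proof (cases zs)
    case Nil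
    then show ?thesis using \<gamma>\<^sub>1 by auto
  next
    case (Cons z zs')
    then obtain \<gamma>\<^sub>2 where \<gamma>\<^sub>2: "walk \<gamma>\<^sub>2 (net_point N y, N) (net_point N (last (y # zs)), N)"
      "L_rho rho par \<gamma>\<^sub>2 \<le> 2 * K0 / (1 - eta_plus) * link_sum (pi_c a Xs rho par) (y # zs)"
      using "3.IH"(2) "3.prems" by auto
    have "walk (\<gamma>\<^sub>1 @ \<gamma>\<^sub>2) (net_point N x, N) (net_point N (last (x # y # zs)), N)"
      using walk_append[OF \<gamma>\<^sub>1(1) \<gamma>\<^sub>2(1)] by simp
    moreover have "L_rho rho par (\<gamma>\<^sub>1 @ \<gamma>\<^sub>2) = L_rho rho par \<gamma>\<^sub>1 + L_rho rho par \<gamma>\<^sub>2"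
      by (simp add: L_rho_def)
    ultimately show ?thesis using \<gamma>\<^sub>1(2) \<gamma>\<^sub>2(2) by (auto simp: distrib_left)
  qed
qed auto

lemma pi_c_le_link_sum:
  assumes H3: "\<forall>n\<ge>n0. \<forall>\<gamma>\<in>Gamma_n X a lam Xs par n x y. pi_c a Xs rho par x y / K1 \<le> L_rho rho par \<gamma>"
    and "0 < K1" and xs: "xs \<in> chains X x y"
  shows "pi_c a Xs rho par x y \<le> K1 * (2 * K0 / (1 - eta_plus)) * link_sum (pi_c a Xs rho par) xs"
proof -
  define N where "N = n0 + link_sum (ntilde a Xs) xs"
  have "successively (\<lambda>p q. ntilde a Xs p q \<le> N) xs"
    unfolding N_def by (rule successively_mono[OF link_le_link_sum[of "ntilde a Xs"]]) auto
  then obtain \<gamma> where \<gamma>: "walk \<gamma> (net_point N x, N) (net_point N y, N)"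
    "L_rho rho par \<gamma> \<le> 2 * K0 / (1 - eta_plus) * link_sum (pi_c a Xs rho par) xs"
    using chain_walk xs unfolding chains_def by blast
  have "xs \<noteq> []" "set xs \<subseteq> X" "hd xs = x" "last xs = y" using xs unfolding chains_def by auto
  then have "x \<in> X" "y \<in> X" by (metis hd_in_set last_in_set subsetD)+
  then have "remdups_adj \<gamma> \<in> Gamma_n X a lam Xs par N x y"
    using is_fpath_remdups_adj[OF \<gamma>(1)] net_point unfolding Gamma_n_def by (auto simp: dist_commute)
  then have "pi_c a Xs rho par x y / K1 \<le> L_rho rho par (remdups_adj \<gamma>)"
    using H3 N_def le_add1 by blast
  also have "\<dots> \<le> L_rho rho par \<gamma>"
    using \<gamma>(1) unfolding walk_def by (intro L_rho_remdups_adj_le) auto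
  finally have "pi_c a Xs rho par x y / K1 \<le> 2 * K0 / (1 - eta_plus) * link_sum (pi_c a Xs rho par) xs"
    using \<gamma>(2) by linarith
  then show ?thesis using \<open>0 < K1\<close> by (subst (asm) pos_divide_le_eq) (auto simp: ac_simps)
qed

end

locale weighted_filling_H3 = weighted_filling +
  fixes K1 :: real
  assumes K1_ge_1: "1 \<le> K1"
    and H3: "x \<in> X \<Longrightarrow> y \<in> X \<Longrightarrow> x \<noteq> y \<Longrightarrow>
      \<exists>n0. \<forall>n\<ge>n0. \<forall>\<gamma>\<in>Gamma_n X a lam Xs par n x y. pi_c a Xs rho par x y / K1 \<le> L_rho rho par \<gamma>"
begin

abbreviation \<Theta> where "\<Theta> \<equiv> Theta X a Xs rho par"

sublocale chain_cost X "pi_c a Xs rho par"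
  using pi_c_pos pi_c_sym by unfold_locales auto

definition lower_const :: real where
  "lower_const = K1 * (2 * K0 / (1 - eta_plus))"

lemma lower_const_ge_1: "1 \<le> lower_const"
proof -
  have "1 \<le> 2 * K0 / (1 - eta_plus)"
    using K0_ge_1 eta_plus_less_1 eta_minus_pos eta_minus_le_plus by (simp add: field_simps)
  then show ?thesis unfolding lower_const_def using K1_ge_1 by (metis mult_mono' mult_1 zero_le_one)
qed

lemma pi_c_le_Theta:
  assumes "x \<in> X" "y \<in> X" "x \<noteq> y"
  shows "pi_c a Xs rho par x y / lower_const \<le> \<Theta> x y"
proof -
  obtain n0 where "\<forall>n\<ge>n0. \<forall>\<gamma>\<in>Gamma_n X a lam Xs par n x y. pi_c a Xs rho par x y / K1 \<le> L_rho rho par \<gamma>"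
    using H3[OF assms] by blast
  then show ?thesis
    unfolding Theta_eq_chain_metric lower_const_def
    using assms pi_c_le_link_sum K1_ge_1 lower_const_ge_1[unfolded lower_const_def]
    by (intro cost_le_chain_metric) auto
qed

lemma Theta_le_pi_c: "x \<in> X \<Longrightarrow> y \<in> X \<Longrightarrow> x \<noteq> y \<Longrightarrow> \<Theta> x y \<le> pi_c a Xs rho par x y"
  unfolding Theta_eq_chain_metric by (rule chain_metric_le_cost)

lemma is_metric_on_Theta: "is_metric_on X \<Theta>"
  unfolding Theta_eq_chain_metric
proof (rule is_metric_on_chain_metric)
  fix x y assume "x \<in> X" "y \<in> X" "x \<noteq> y"
  then show "0 < chain_metric X (pi_c a Xs rho par) x y"
    using pi_c_le_Theta pi_c_pos lower_const_ge_1 unfolding Theta_eq_chain_metric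
    by (meson divide_pos_pos less_le_trans zero_less_one)
qed

end

section \<open>Quasisymmetry\<close>

context weighted_filling
begin

lemma level_ratio_le:
  assumes "x \<in> X" "p \<in> X" "q \<in> X" "x \<noteq> p" "x \<noteq> q"
  shows "a powr (real (ntilde a Xs x q) - real (ntilde a Xs x p)) \<le> 4 * a * (dist x p / dist x q)"
proof -
  let ?np = "ntilde a Xs x p" and ?nq = "ntilde a Xs x q"
  have "a ^ ?nq * dist x q < 4" "1 < a ^ Suc ?np * dist x p"
    using dist_ntilde_bounds[OF assms(1,3,5)] dist_ntilde_bounds[OF assms(1,2,4)] a_pos
    by (simp_all add: field_simps)
  then have "a ^ ?nq * dist x q \<le> 4 * a * a ^ ?np * dist x p" by simp
  then have "a ^ ?nq / a ^ ?np \<le> 4 * a * (dist x p / dist x q)"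
    using assms a_pos by (simp add: field_simps)
  then show ?thesis using a_pos by (simp add: powr_diff powr_realpow)
qed

lemma pi_c_ratio_le:
  assumes \<alpha>: "1 \<le> \<alpha>" "eta_plus \<le> a powr (-1 / \<alpha>)" "a powr (- \<alpha>) \<le> eta_minus"
    and "x \<in> X" "p \<in> X" "q \<in> X" "x \<noteq> p" "x \<noteq> q"
  defines "s \<equiv> a powr (real (ntilde a Xs x q) - real (ntilde a Xs x p))"
  shows "pi_c a Xs rho par x p / pi_c a Xs rho par x q \<le> K0 * max (s powr \<alpha>) (s powr (1 / \<alpha>))"
proof -
  obtain cp where cp: "cp \<in> cset a Xs x p" "\<pi> cp = pi_c a Xs rho par x p"
    using pi_c_attained assms by blast
  obtain cq where cq: "cq \<in> cset a Xs x q" "\<pi> cq = pi_c a Xs rho par x q"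
    using pi_c_attained assms by blast
  have p: "cp \<in> fverts Xs" "snd cp = ntilde a Xs x p" "dist (fst cp) x < 2 / a ^ snd cp"
    and q: "cq \<in> fverts Xs" "snd cq = ntilde a Xs x q" "dist (fst cq) x < 2 / a ^ snd cq"
    using cp(1) cq(1) unfolding cset_def by auto
  have pos: "0 < \<pi> cp" "0 < \<pi> cq" using pi_pos p q by auto
  let ?S = "max (s powr \<alpha>) (s powr (1 / \<alpha>))"
  have "\<pi> cp \<le> K0 * ?S * \<pi> cq"
  proof (cases "snd cq \<le> snd cp")
    case True
    define k where "k = snd cp - snd cq"
    have "\<pi> cp \<le> K0 * eta_plus ^ k * \<pi> cq"
      using pi_compare_levels(1)[OF q(1) p(1) True q(3) p(3)] unfolding k_def .
    also have "\<dots> \<le> K0 * (a powr (-1 / \<alpha>)) ^ k * \<pi> cq"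
      using \<alpha> eta_minus_pos eta_minus_le_plus K0_ge_1 pos
      by (intro mult_right_mono mult_left_mono power_mono) auto
    also have "(a powr (-1 / \<alpha>)) ^ k = a powr (- (real k / \<alpha>))"
      using a_pos by (simp add: powr_powr flip: powr_realpow)
    also have "\<dots> = s powr (1 / \<alpha>)"
      using True unfolding s_def k_def p(2)[symmetric] q(2)[symmetric]
      by (simp add: powr_powr of_nat_diff diff_divide_distrib)
    also have "K0 * s powr (1 / \<alpha>) * \<pi> cq \<le> K0 * ?S * \<pi> cq"
      using K0_ge_1 pos by (intro mult_right_mono mult_left_mono) auto
    finally show ?thesis .
  next
    case False
    define k where "k = snd cq - snd cp"
    have s: "s powr \<alpha> = a powr (\<alpha> * real k)"
      using False unfolding s_def k_def p(2)[symmetric] q(2)[symmetric]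
      by (simp add: powr_powr of_nat_diff mult.commute)
    have "(a powr (- \<alpha>)) ^ k * s powr \<alpha> = 1"
      using a_pos unfolding s by (simp add: powr_powr powr_add[symmetric] flip: powr_realpow)
    then have "\<pi> cp = s powr \<alpha> * ((a powr (- \<alpha>)) ^ k * \<pi> cp)"
      by (simp add: algebra_simps)
    also have "\<dots> \<le> s powr \<alpha> * (eta_minus ^ k * \<pi> cp)"
      using \<alpha> pos by (intro mult_left_mono mult_right_mono power_mono) auto
    also have "\<dots> \<le> s powr \<alpha> * (K0 * \<pi> cq)"
      using pi_compare_levels(2)[OF p(1) q(1) _ p(3) q(3)] False unfolding k_def
      by (intro mult_left_mono) auto
    also have "\<dots> \<le> K0 * ?S * \<pi> cq"
      using K0_ge_1 pos by (simp add: mult.left_commute mult_right_mono)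
    finally show ?thesis .
  qed
  then show ?thesis using cp(2) cq(2) pos by (simp add: pos_divide_le_eq)
qed

end

lemma exponent_for_weights:
  fixes a em ep :: real
  assumes "1 < a" "0 < em" "em \<le> ep" "ep < 1"
  obtains \<alpha> where "1 \<le> \<alpha>" "ep \<le> a powr (-1 / \<alpha>)" "a powr (- \<alpha>) \<le> em"
proof
  define \<alpha> where "\<alpha> = max 1 (max (ln a / - ln ep) (- ln em / ln a))"
  have ln_a: "0 < ln a" and ln_ep: "0 < - ln ep" using assms by auto
  show "1 \<le> \<alpha>" unfolding \<alpha>_def by simp
  have "ln a / - ln ep \<le> \<alpha>" unfolding \<alpha>_def by simp
  then have "ln ep \<le> -1 / \<alpha> * ln a"
    using ln_ep \<open>1 \<le> \<alpha>\<close> by (simp add: pos_divide_le_eq field_simps)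
  then have "exp (ln ep) \<le> exp (-1 / \<alpha> * ln a)" by simp
  then show "ep \<le> a powr (-1 / \<alpha>)" using assms by (simp add: powr_def)
  have "- ln em / ln a \<le> \<alpha>" unfolding \<alpha>_def by simp
  then have "- ln em \<le> \<alpha> * ln a" by (subst (asm) pos_divide_le_eq[OF ln_a])
  then have "- \<alpha> * ln a \<le> ln em" by simp
  then have "exp (- \<alpha> * ln a) \<le> exp (ln em)" by simp
  then show "a powr (- \<alpha>) \<le> em" using assms by (simp add: powr_def)
qed

lemma max_powr_le:
  fixes s t b \<alpha> :: real
  assumes "0 < s" "s \<le> b * t" "1 \<le> b" "1 \<le> \<alpha>"
  shows "max (s powr \<alpha>) (s powr (1 / \<alpha>)) \<le> b powr \<alpha> * max (t powr \<alpha>) (t powr (1 / \<alpha>))"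
proof -
  have t: "0 < t" using assms zero_less_mult_pos[of b t] by simp
  have "s powr \<alpha> \<le> b powr \<alpha> * t powr \<alpha>"
    using assms t by (metis powr_mono2 powr_mult less_imp_le zero_le_one order_trans)
  moreover have "s powr (1 / \<alpha>) \<le> b powr (1 / \<alpha>) * t powr (1 / \<alpha>)"
    using assms t by (metis powr_mono2 powr_mult less_imp_le zero_le_one order_trans zero_le_divide_1_iff)
  moreover have "1 / \<alpha> \<le> 1" using assms by simp
  then have "1 / \<alpha> \<le> \<alpha>" using assms by linarith
  then have "b powr (1 / \<alpha>) \<le> b powr \<alpha>" using assms by (intro powr_mono) auto
  ultimately have "s powr (1 / \<alpha>) \<le> b powr \<alpha> * t powr (1 / \<alpha>)"
    by (meson order_trans mult_right_mono powr_ge_zero)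
  with \<open>s powr \<alpha> \<le> b powr \<alpha> * t powr \<alpha>\<close> show ?thesis
    by (simp add: max_mult_distrib_left max.coboundedI1 max.coboundedI2)
qed

context weighted_filling_H3
begin

lemma Theta_ratio_le:
  assumes \<alpha>: "1 \<le> \<alpha>" "eta_plus \<le> a powr (-1 / \<alpha>)" "a powr (- \<alpha>) \<le> eta_minus"
    and x: "x \<in> X" "p \<in> X" "q \<in> X" "x \<noteq> q"
  defines "t \<equiv> dist x p / dist x q"
  shows "\<Theta> x p / \<Theta> x q \<le> lower_const * K0 * (4 * a) powr \<alpha> * max (t powr \<alpha>) (t powr (1 / \<alpha>))"
proof (cases "p = x")
  case True
  have "0 \<le> max (t powr \<alpha>) (t powr (1 / \<alpha>))" by (simp add: le_max_iff_disj)
  then show ?thesis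
    using True lower_const_ge_1 K0_ge_1 by (simp add: Theta_def)
next
  case False
  let ?s = "a powr (real (ntilde a Xs x q) - real (ntilde a Xs x p))"
  have pos: "0 < pi_c a Xs rho par x p" "0 < pi_c a Xs rho par x q" using pi_c_pos x False by auto
  have "\<Theta> x p / \<Theta> x q \<le> pi_c a Xs rho par x p / (pi_c a Xs rho par x q / lower_const)"
    using Theta_le_pi_c pi_c_le_Theta chain_metric_nonneg[unfolded Theta_eq_chain_metric[symmetric]]
      x False pos lower_const_ge_1
    by (intro frac_le) auto
  also have "\<dots> = lower_const * (pi_c a Xs rho par x p / pi_c a Xs rho par x q)"
    by simp
  also have "\<dots> \<le> lower_const * (K0 * max (?s powr \<alpha>) (?s powr (1 / \<alpha>)))"
    using pi_c_ratio_le[OF \<alpha> x(1-3)] False x(4) lower_const_ge_1 by (intro mult_left_mono) auto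
  also have "\<dots> \<le> lower_const * (K0 * ((4 * a) powr \<alpha> * max (t powr \<alpha>) (t powr (1 / \<alpha>))))"
    using max_powr_le[OF _ level_ratio_le[OF x(1-3)] _ \<alpha>(1)] False x(4) a_ge_6 lower_const_ge_1 K0_ge_1
    unfolding t_def by (intro mult_left_mono) auto
  finally show ?thesis by (simp add: mult.assoc)
qed

lemma in_Jp_Theta: "in_Jp X \<Theta>"
proof -
  have "1 < a" using a_ge_6 by simp
  then obtain \<alpha> where \<alpha>: "1 \<le> \<alpha>" "eta_plus \<le> a powr (-1 / \<alpha>)" "a powr (- \<alpha>) \<le> eta_minus"
    by (rule exponent_for_weights[OF _ eta_minus_pos eta_minus_le_plus eta_plus_less_1])
  have "1 \<le> (4 * a) powr \<alpha>" using a_ge_6 \<alpha>(1) by (intro ge_one_powr_ge_zero) auto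
  then have "1 \<le> lower_const * K0 * (4 * a) powr \<alpha>"
    using lower_const_ge_1 K0_ge_1 by (metis mult_mono' mult_1 zero_le_one)
  then show ?thesis
    unfolding in_Jp_def using is_metric_on_Theta Theta_ratio_le[OF \<alpha>] \<alpha>(1) by blast
qed

end

theorem corollary3p7:
  fixes X :: "'a::metric_space set" and a lam :: real and Xs :: "nat \<Rightarrow> 'a set" and x0 :: 'a
    and par :: "'a \<times> nat \<Rightarrow> 'a \<times> nat" and rho :: "'a \<times> nat \<Rightarrow> real"
  assumes "compact X" and "doubling X" and "diameter X = 1/2"
    and "hyperbolic_filling X a lam Xs x0 par"
    and "\<forall>v\<in>fverts Xs. 0 < rho v"
    and H1: "\<exists>eta_minus eta_plus. 0 < eta_minus \<and> eta_minus \<le> eta_plus \<and> eta_plus < 1 \<and>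
               (\<forall>v\<in>fverts Xs. eta_minus \<le> rho v \<and> rho v \<le> eta_plus)"
    and H2: "\<exists>K0\<ge>1. \<forall>v w. horiz_adj X a lam Xs v w \<longrightarrow> pi_rho rho par v \<le> K0 * pi_rho rho par w"
    and H3: "\<exists>K1\<ge>1. \<forall>x\<in>X. \<forall>y\<in>X. x \<noteq> y \<longrightarrow> (\<exists>n0. \<forall>n\<ge>n0. \<forall>\<gamma>\<in>Gamma_n X a lam Xs par n x y.
               L_rho rho par \<gamma> \<ge> pi_c a Xs rho par x y / K1)"
  shows "is_metric_on X (Theta X a Xs rho par) \<and> in_Jp X (Theta X a Xs rho par)"
proof -
  obtain eta_minus eta_plus where eta: "0 < eta_minus" "eta_minus \<le> eta_plus" "eta_plus < 1"
    "\<forall>v\<in>fverts Xs. eta_minus \<le> rho v \<and> rho v \<le> eta_plus"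
    using H1 by blast
  obtain K0 where K0: "1 \<le> K0"
    "\<forall>v w. horiz_adj X a lam Xs v w \<longrightarrow> pi_rho rho par v \<le> K0 * pi_rho rho par w"
    using H2 by blast
  obtain K1 where K1: "1 \<le> K1" "\<forall>x\<in>X. \<forall>y\<in>X. x \<noteq> y \<longrightarrow> (\<exists>n0. \<forall>n\<ge>n0.
      \<forall>\<gamma>\<in>Gamma_n X a lam Xs par n x y. pi_c a Xs rho par x y / K1 \<le> L_rho rho par \<gamma>)"
    using H3 by blast
  interpret weighted_filling_H3 X a lam Xs x0 par rho eta_minus eta_plus K0 K1
    using assms(1,3,4) eta K0 K1 by unfold_locales auto
  show ?thesis using is_metric_on_Theta in_Jp_Theta by blast
qed

end
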